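(* Let $w=w_0w_1w_2\ldots$ be a one-sided infinite word over a finite alphabet $\mathcal A=\{a_1,\dots,a_k\}$ and fix $1\le j\le k$ such that $a_j$ occurs infinitely often in $w$. Suppose there is $m\in\mathbb{N}$ such that the integer sequence $(b_n)_{n\ge1}$ defined by \[\sum_{n=1}^\infty b_nX^n=(1-X)^m\sum_{n=1}^\infty p_j(n)X^n\] takes only finitely many values. Then $P_{a_j}(X)\in\mathbb{Q}(X)$ if $(b_n)$ is eventually periodic, and $P_{a_j}(X)$ is transcendental over $\mathbb{Q}(X)$ if $(b_n)$ is not eventually periodic.
   Context: Positions in $w$ are indexed starting from $0$. For $n\ge1$, $p_j(n)$ denotes the position of the $n$-th occurrence of $a_j$ in $w$, and $P_{a_j}(X)=\sum_{n\ge1}p_j(n)X^n$. A sequence is eventually periodic if there exist $N$, $d\ge1$ with $s_{n+d}=s_n$ for all $n\ge N$. Transcendence over $\mathbb{Q}(X)$ is meant inside $\mathbb{C}((X))$. *)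

theory Defs
  imports "HOL-Computational_Algebra.Computational_Algebra"
begin

text \<open>Position (0-indexed) of the n-th occurrence (n \<ge> 1) of letter a in the
  infinite word w: the unique position i with w i = a preceded by exactly n-1
  occurrences of a.\<close>
definition occ_pos :: "(nat \<Rightarrow> 'a) \<Rightarrow> 'a \<Rightarrow> nat \<Rightarrow> nat" where
  "occ_pos w a n = (THE i. w i = a \<and> card {k. k < i \<and> w k = a} = n - 1)"

definition occ_series :: "(nat \<Rightarrow> 'a) \<Rightarrow> 'a \<Rightarrow> rat fps" where
  "occ_series w a = Abs_fps (\<lambda>n. if n = 0 then 0 else of_nat (occ_pos w a n))"

definition eventually_periodic :: "(nat \<Rightarrow> 'b) \<Rightarrow> bool" where
  "eventually_periodic s \<longleftrightarrow> (\<exists>N d. d \<ge> 1 \<and> (\<forall>n\<ge>N. s (n + d) = s n))"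

definition rational_fps :: "rat fps \<Rightarrow> bool" where
  "rational_fps f \<longleftrightarrow> (\<exists>p q :: rat poly. q \<noteq> 0 \<and> fps_of_poly q * f = fps_of_poly p)"

text \<open>Transcendental over Q(X): no nonzero polynomial with coefficients in Q[X]
  (equivalently, after clearing denominators, in Q(X)) vanishes at f.\<close>
definition transcendental_fps :: "rat fps \<Rightarrow> bool" where
  "transcendental_fps f \<longleftrightarrow>
     \<not> (\<exists>Q :: rat poly poly. Q \<noteq> 0 \<and> poly (map_poly fps_of_poly Q) f = 0)"

end

theory Submission
  imports Defs
begin

text \<open>
  Let B = (1 - X)^m P, a series with finitely many coefficient values. If they are eventually
  periodic with period d, then (1 - X^d) B is a polynomial, so P is rational.

  Conversely, if P were algebraic over Q(X), so would be B. Differentiating a minimal polynomial Q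
  of B gives Q'(B) B' = polynomial in B, so every derivative of B, multiplied by a power of Q'(B),
  lies in the Q[X]-module spanned by 1, B, ..., B^(deg Q - 1); hence B satisfies a nontrivial linear
  differential equation with polynomial coefficients. Comparing the n-th coefficients and dividing
  by n^D, D the order of the equation, the bounded coefficients of B force the sums
  sum_j c_(D,j) b_(n+D-j) to tend to 0; taking finitely many values, they eventually vanish. So B is
  rational, and then its coefficients obey a linear recurrence; as they take finitely many values,
  the pigeonhole principle on windows of that recurrence makes them eventually periodic.
\<close>

section \<open>Polynomials over Q[X] evaluated at power series\<close>

definition poly_fps :: "'a::comm_ring_1 poly poly \<Rightarrow> 'a fps \<Rightarrow> 'a fps" where
  "poly_fps R f = poly (map_poly fps_of_poly R) f"

definition algebraic_fps :: "'a::comm_ring_1 fps \<Rightarrow> bool" where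
  "algebraic_fps f \<longleftrightarrow> (\<exists>Q. Q \<noteq> 0 \<and> poly_fps Q f = 0)"

lemma transcendental_fps_iff_not_algebraic: "transcendental_fps f \<longleftrightarrow> \<not> algebraic_fps f"
  by (simp add: transcendental_fps_def algebraic_fps_def poly_fps_def)

lemma fps_of_poly_of_nat [simp]: "fps_of_poly (of_nat n) = of_nat n"
  by (induction n) (simp_all add: fps_of_poly_add)

lemma poly_fps_0 [simp]: "poly_fps 0 f = 0"
  by (simp add: poly_fps_def)

lemma poly_fps_pCons [simp]: "poly_fps (pCons a R) f = fps_of_poly a + f * poly_fps R f"
  by (simp add: poly_fps_def map_poly_pCons)

lemma poly_fps_add [simp]: "poly_fps (R + S) f = poly_fps R f + poly_fps S f"
proof (induction R arbitrary: S)
  case (pCons a R)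
  then show ?case
    by (cases S) (simp add: fps_of_poly_add algebra_simps)
qed simp

lemma poly_fps_smult [simp]: "poly_fps (smult a R) f = fps_of_poly a * poly_fps R f"
  by (induction R) (simp_all add: fps_of_poly_mult algebra_simps)

lemma poly_fps_mult [simp]: "poly_fps (R * S) f = poly_fps R f * poly_fps S f"
  by (induction R) (simp_all add: algebra_simps)

lemma poly_fps_minus [simp]: "poly_fps (- R) f = - poly_fps R f"
  by (metis add_eq_0_iff poly_fps_0 poly_fps_add neg_eq_iff_add_eq_0 add.right_inverse)

lemma poly_fps_diff [simp]: "poly_fps (R - S) f = poly_fps R f - poly_fps S f"
  using poly_fps_add[of R "- S" f] by simp

lemma poly_fps_power [simp]: "poly_fps (R ^ n) f = poly_fps R f ^ n"
  by (induction n) (simp_all add: one_pCons)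

lemma poly_fps_sum: "poly_fps (\<Sum>i\<in>A. R i) f = (\<Sum>i\<in>A. poly_fps (R i) f)"
  by (induction A rule: infinite_finite_induct) simp_all

lemma poly_fps_monom [simp]: "poly_fps (monom c n) f = fps_of_poly c * f ^ n"
  by (simp add: poly_fps_def map_poly_monom poly_monom)

lemma fps_deriv_poly_fps:
  "fps_deriv (poly_fps R f) = poly_fps (map_poly pderiv R) f + poly_fps (pderiv R) f * fps_deriv f"
proof (induction R)
  case (pCons a R)
  then show ?case
    by (simp add: map_poly_pCons pderiv_pCons fps_of_poly_pderiv algebra_simps)
qed simp

lemma poly_fps_eq_sum: "poly_fps Q f = (\<Sum>i\<le>degree Q. fps_of_poly (coeff Q i) * f ^ i)"
proof -
  have "poly_fps Q f = poly_fps (\<Sum>i\<le>degree Q. monom (coeff Q i) i) f"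
    by (simp add: poly_as_sum_of_monoms)
  then show ?thesis
    by (simp add: poly_fps_sum)
qed

lemma algebraic_fps_mult_poly:
  assumes "algebraic_fps f"
  shows "algebraic_fps (fps_of_poly u * f)"
proof -
  obtain Q where Q: "Q \<noteq> 0" "poly_fps Q f = 0"
    using assms unfolding algebraic_fps_def by blast
  define d where "d = degree Q"
  define U where "U = fps_of_poly u"
  \<comment> \<open>The homogenisation u^d Q(y / u) annihilates u f.\<close>
  define Q' where "Q' = (\<Sum>i\<le>d. monom (coeff Q i * u ^ (d - i)) i)"
  have "coeff Q' d = coeff Q d"
    by (simp add: Q'_def coeff_sum)
  then have "Q' \<noteq> 0"
    using Q(1) by (auto simp: d_def)
  have U_power: "U ^ (d - i) * (U * f) ^ i = U ^ d * f ^ i" if "i \<le> d" for i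
  proof -
    have "U ^ (d - i) * (U * f) ^ i = U ^ (d - i + i) * f ^ i"
      by (simp add: power_add power_mult_distrib mult.assoc)
    then show ?thesis
      using that by simp
  qed
  have "poly_fps Q' (U * f) = (\<Sum>i\<le>d. fps_of_poly (coeff Q i) * (U ^ (d - i) * (U * f) ^ i))"
    by (simp add: Q'_def U_def poly_fps_sum fps_of_poly_mult fps_of_poly_power mult.assoc)
  also have "\<dots> = (\<Sum>i\<le>d. U ^ d * (fps_of_poly (coeff Q i) * f ^ i))"
    by (intro sum.cong refl) (simp add: U_power mult.left_commute)
  also have "\<dots> = U ^ d * poly_fps Q f"
    by (simp add: poly_fps_eq_sum d_def sum_distrib_left)
  finally have "poly_fps Q' (U * f) = 0"
    using Q(2) by simp
  with \<open>Q' \<noteq> 0\<close> show ?thesis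
    unfolding algebraic_fps_def U_def by blast
qed

section \<open>Algebraic power series satisfy linear differential equations\<close>

lemma polys_linearly_dependent:
  fixes U :: "nat \<Rightarrow> 'r::idom poly"
  assumes "finite I" "card I > n" "\<forall>i\<in>I. \<forall>k\<ge>n. coeff (U i) k = 0"
  shows "\<exists>c. (\<exists>i\<in>I. c i \<noteq> 0) \<and> (\<Sum>i\<in>I. smult (c i) (U i)) = 0"
  using assms
proof (induction n arbitrary: I U)
  case 0
  then have "I \<noteq> {}" and "\<forall>i\<in>I. U i = 0"
    by (auto intro: poly_eqI)
  then show ?case by (intro exI[of _ "\<lambda>_. 1"]) auto
next
  case (Suc n)
  show ?case
  proof (cases "\<forall>i\<in>I. coeff (U i) n = 0")
    case True
    then have "\<forall>i\<in>I. \<forall>k\<ge>n. coeff (U i) k = 0"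
      using Suc.prems(3) by (metis Suc_leI le_neq_implies_less)
    then show ?thesis using Suc.IH[of I U] Suc.prems by auto
  next
    case False
    then obtain j where j: "j \<in> I" "coeff (U j) n \<noteq> 0" by auto
    define I' where "I' = I - {j}"
    \<comment> \<open>Gaussian elimination: cancel the coefficient of degree n against U j.\<close>
    define V where "V i = smult (coeff (U j) n) (U i) - smult (coeff (U i) n) (U j)" for i
    have high: "coeff (U i) k = 0" if "i \<in> I" "n < k" for i k
      using Suc.prems(3) that by (simp add: Suc_le_eq)
    have "\<forall>i\<in>I'. \<forall>k\<ge>n. coeff (V i) k = 0"
      using j by (auto simp: V_def I'_def le_less high)
    moreover have "finite I'" "card I' > n"
      using Suc.prems j by (auto simp: I'_def)
    ultimately obtain c' where c': "\<exists>i\<in>I'. c' i \<noteq> 0" "(\<Sum>i\<in>I'. smult (c' i) (V i)) = 0"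
      using Suc.IH[of I' V] by blast
    define c where "c i = (if i = j then - (\<Sum>l\<in>I'. c' l * coeff (U l) n)
                           else c' i * coeff (U j) n)" for i
    have "(\<Sum>i\<in>I. smult (c i) (U i)) = smult (c j) (U j) + (\<Sum>i\<in>I'. smult (c i) (U i))"
      using Suc.prems(1) j by (simp add: I'_def sum.remove)
    also have "(\<Sum>i\<in>I'. smult (c i) (U i)) = (\<Sum>i\<in>I'. smult (c' i * coeff (U j) n) (U i))"
      by (rule sum.cong) (auto simp: c_def I'_def)
    also have "\<dots> = (\<Sum>i\<in>I'. smult (c' i) (V i))
                    + smult (\<Sum>i\<in>I'. c' i * coeff (U i) n) (U j)"
      by (simp add: V_def smult_diff_right smult_sum sum.distrib[symmetric] algebra_simps)
    finally have "(\<Sum>i\<in>I. smult (c i) (U i)) = 0"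
      using c'(2) by (simp add: c_def)
    moreover obtain i0 where "i0 \<in> I'" "c' i0 \<noteq> 0" using c' by blast
    then have "i0 \<in> I" "c i0 \<noteq> 0" using j by (auto simp: c_def I'_def)
    ultimately show ?thesis by blast
  qed
qed

lemma algebraic_fps_separable_annihilator:
  fixes f :: "'a::field_char_0 fps"
  assumes "algebraic_fps f"
  obtains Q where "Q \<noteq> 0" "poly_fps Q f = 0" "poly_fps (pderiv Q) f \<noteq> 0"
proof -
  from assms obtain Q1 where "Q1 \<noteq> 0 \<and> poly_fps Q1 f = 0"
    unfolding algebraic_fps_def by blast
  from ex_has_least_nat[of "\<lambda>R. R \<noteq> 0 \<and> poly_fps R f = 0", OF this, of degree]
  obtain Q where Q: "Q \<noteq> 0" "poly_fps Q f = 0"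
    and min: "\<And>R. R \<noteq> 0 \<Longrightarrow> poly_fps R f = 0 \<Longrightarrow> degree Q \<le> degree R"
    by blast
  have "degree Q \<noteq> 0"
  proof
    assume "degree Q = 0"
    then have "Q = [:coeff Q 0:]" "coeff Q 0 \<noteq> 0"
      using Q(1) degree_0_id[of Q] by auto
    moreover have "fps_of_poly (coeff Q 0) \<noteq> 0"
      using fps_of_poly_eq_iff[of "coeff Q 0" 0] \<open>coeff Q 0 \<noteq> 0\<close> by simp
    ultimately show False
      using Q(2) by (metis poly_fps_pCons poly_fps_0 add_0_right mult_zero_right)
  qed
  then have nonzero: "pderiv Q \<noteq> 0" and smaller: "degree (pderiv Q) < degree Q"
    by (simp_all add: pderiv_eq_0_iff degree_pderiv)
  have "poly_fps (pderiv Q) f \<noteq> 0"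
  proof
    assume "poly_fps (pderiv Q) f = 0"
    then have "degree Q \<le> degree (pderiv Q)"
      using min nonzero by blast
    then show False
      using smaller by simp
  qed
  with Q show thesis by (rule that)
qed

lemma poly_fps_pderiv_power_mult_deriv_iterate:
  fixes f :: "'a::idom fps"
  assumes "poly_fps Q f = 0"
  shows "\<exists>R. poly_fps (pderiv Q) f ^ (2 * k) * (fps_deriv ^^ k) f = poly_fps R f"
proof (induction k)
  case 0
  show ?case by (intro exI[of _ "[:0, 1:]"]) simp
next
  case (Suc k)
  define g where "g = poly_fps (pderiv Q) f"
  define Qx where "Qx = map_poly pderiv Q"
  define Pd where "Pd = pderiv (pderiv Q)"
  define Px where "Px = map_poly pderiv (pderiv Q)"
  \<comment> \<open>Differentiating Q(f) = 0 expresses g f' as a polynomial in f, and then also g g'.\<close>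
  have f': "g * fps_deriv f = - poly_fps Qx f"
    using arg_cong[OF assms, of fps_deriv]
    by (simp add: fps_deriv_poly_fps g_def Qx_def eq_neg_iff_add_eq_0 add.commute)
  have "g * fps_deriv g = g * poly_fps Px f + poly_fps Pd f * (g * fps_deriv f)"
    unfolding g_def fps_deriv_poly_fps Pd_def Px_def by (simp only: distrib_left mult_ac)
  then have g': "g * fps_deriv g = g * poly_fps Px f - poly_fps Pd f * poly_fps Qx f"
    by (simp add: f')
  from Suc obtain R where R: "g ^ (2 * k) * (fps_deriv ^^ k) f = poly_fps R f"
    by (auto simp: g_def)
  define h where "h = (fps_deriv ^^ k) f"
  have dR: "g ^ (2 * k) * fps_deriv h = fps_deriv (poly_fps R f) - fps_deriv (g ^ (2 * k)) * h"
    by (simp flip: R add: h_def fps_deriv_mult)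
  have dg: "g\<^sup>2 * fps_deriv (g ^ (2 * k)) = of_nat (2 * k) * (g * fps_deriv g) * g ^ (2 * k)"
  proof (cases k)
    case (Suc k')
    then have "g ^ (2 * k) = g * g ^ (2 * k - 1)"
      by (simp add: power_eq_if)
    then show ?thesis
      unfolding fps_deriv_power' by (simp add: power2_eq_square mult_ac)
  qed simp
  have "g ^ (2 * Suc k) * (fps_deriv ^^ Suc k) f = g\<^sup>2 * (g ^ (2 * k) * fps_deriv h)"
    by (simp add: h_def power2_eq_square mult_ac)
  also have "\<dots> = g\<^sup>2 * fps_deriv (poly_fps R f) - (g\<^sup>2 * fps_deriv (g ^ (2 * k))) * h"
    by (simp only: dR right_diff_distrib mult.assoc)
  also have "\<dots> = g\<^sup>2 * poly_fps (map_poly pderiv R) f + g * poly_fps (pderiv R) f * (g * fps_deriv f)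
                   - of_nat (2 * k) * (g * fps_deriv g) * (g ^ (2 * k) * h)"
    unfolding dg fps_deriv_poly_fps by (simp only: power2_eq_square distrib_left mult_ac)
  also have "\<dots> = poly_fps ((pderiv Q)\<^sup>2 * map_poly pderiv R - pderiv Q * pderiv R * Qx
                   - smult (of_nat (2 * k)) (pderiv Q * Px - Pd * Qx) * R) f"
    unfolding f' g' R[folded h_def]
    by (simp add: g_def[symmetric] fps_of_poly_simps power2_eq_square algebra_simps)
  finally show ?case
    unfolding g_def by blast
qed

lemma poly_fps_pseudo_remainder:
  fixes f :: "'a::idom fps"
  assumes "Q \<noteq> 0" "poly_fps Q f = 0"
  obtains h T where "h \<noteq> 0" "\<forall>j\<ge>degree Q. coeff T j = 0"
    "fps_of_poly h * poly_fps S f = poly_fps T f"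
proof -
  define h where "h = lead_coeff Q ^ (Suc (degree S) - degree Q)"
  obtain q where q: "smult h S = Q * q + pseudo_mod S Q"
    using pseudo_divmod[OF assms(1) prod.collapse[symmetric]]
    by (auto simp: pseudo_mod_def h_def)
  have "\<forall>j\<ge>degree Q. coeff (pseudo_mod S Q) j = 0"
  proof (intro allI impI)
    fix j assume "degree Q \<le> j"
    then show "coeff (pseudo_mod S Q) j = 0"
      using pseudo_mod(2)[OF assms(1), of S] by (auto intro: coeff_eq_0)
  qed
  moreover have "fps_of_poly h * poly_fps S f = poly_fps (pseudo_mod S Q) f"
    using arg_cong[OF q, of "\<lambda>R. poly_fps R f"] assms(2) by simp
  moreover have "h \<noteq> 0"
    using assms(1) by (simp add: h_def)
  ultimately show thesis by (rule that[rotated])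
qed

lemma algebraic_fps_linear_ode:
  fixes f :: "'a::field_char_0 fps"
  assumes "algebraic_fps f"
  obtains s c where "\<exists>k\<le>s. c k \<noteq> 0" "(\<Sum>k\<le>s. fps_of_poly (c k) * (fps_deriv ^^ k) f) = 0"
proof -
  obtain Q where Q: "Q \<noteq> 0" "poly_fps Q f = 0" and g0: "poly_fps (pderiv Q) f \<noteq> 0"
    using assms by (rule algebraic_fps_separable_annihilator)
  define d where "d = degree Q"
  define g where "g = poly_fps (pderiv Q) f"
  obtain R where R: "\<And>k. g ^ (2 * k) * (fps_deriv ^^ k) f = poly_fps (R k) f"
    using poly_fps_pderiv_power_mult_deriv_iterate[OF Q(2)] unfolding g_def by metis
  have "\<exists>h T. h \<noteq> 0 \<and> (\<forall>j\<ge>d. coeff T j = 0) \<and>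
          fps_of_poly h * poly_fps (pderiv Q ^ (2 * (d - k)) * R k) f = poly_fps T f" for k
    using poly_fps_pseudo_remainder[OF Q] unfolding d_def by metis
  then obtain h T where h: "\<And>k. h k \<noteq> 0" and T: "\<And>k. \<forall>j\<ge>d. coeff (T k) j = 0"
    and hT: "\<And>k. fps_of_poly (h k) * poly_fps (pderiv Q ^ (2 * (d - k)) * R k) f = poly_fps (T k) f"
    by metis
  \<comment> \<open>The d + 1 series g^(2d) h_k f^(k), k \<le> d, all lie in the span of 1, f, ..., f^(d-1).\<close>
  have ode_k: "g ^ (2 * d) * (fps_of_poly (h k) * (fps_deriv ^^ k) f) = poly_fps (T k) f"
    if "k \<le> d" for k
  proof -
    have "2 * d = 2 * (d - k) + 2 * k"
      using that by simp
    then have "g ^ (2 * d) * (fps_of_poly (h k) * (fps_deriv ^^ k) f)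
        = fps_of_poly (h k) * (g ^ (2 * (d - k)) * (g ^ (2 * k) * (fps_deriv ^^ k) f))"
      by (simp add: power_add mult_ac)
    also have "\<dots> = poly_fps (T k) f"
      using hT[of k] R[of k] by (simp add: g_def)
    finally show ?thesis .
  qed
  obtain c where c: "\<exists>k\<le>d. c k \<noteq> 0" "(\<Sum>k\<le>d. smult (c k) (T k)) = 0"
    using polys_linearly_dependent[of "{..d}" d T] T by auto
  have "g ^ (2 * d) * (\<Sum>k\<le>d. fps_of_poly (c k * h k) * (fps_deriv ^^ k) f)
          = poly_fps (\<Sum>k\<le>d. smult (c k) (T k)) f"
    by (simp add: poly_fps_sum sum_distrib_left fps_of_poly_mult ode_k[symmetric] mult_ac)
  then have "(\<Sum>k\<le>d. fps_of_poly (c k * h k) * (fps_deriv ^^ k) f) = 0"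
    using c(2) g0 by (simp add: g_def)
  moreover have "\<exists>k\<le>d. c k * h k \<noteq> 0"
    using c(1) h by auto
  ultimately show thesis
    by (rule that[rotated])
qed

section \<open>Finitely valued solutions of linear differential equations\<close>

lemma fps_deriv_iterate_nth:
  "(fps_deriv ^^ k) (f :: 'a::comm_semiring_1 fps) $ i = pochhammer (of_nat i + 1) k * f $ (i + k)"
  by (induction k arbitrary: i) (simp_all add: pochhammer_rec algebra_simps)

lemma fps_mult_nth_degree_le:
  fixes f :: "'a::comm_ring_1 fps"
  assumes "degree p \<le> G" "G \<le> n"
  shows "(fps_of_poly p * f) $ n = (\<Sum>j\<le>G. coeff p j * f $ (n - j))"
  unfolding fps_mult_nth fps_of_poly_nth
proof (rule sum.mono_neutral_right)
  show "\<forall>i\<in>{0..n} - {..G}. coeff p i * f $ (n - i) = 0"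
  proof
    fix i assume "i \<in> {0..n} - {..G}"
    then have "degree p < i"
      using assms(1) by auto
    then show "coeff p i * f $ (n - i) = 0"
      by (simp add: coeff_eq_0)
  qed
qed (use assms(2) in auto)

lemma linear_ode_nth:
  fixes f :: "'a::comm_ring_1 fps"
  assumes ode: "(\<Sum>k\<le>s. fps_of_poly (c k) * (fps_deriv ^^ k) f) = 0"
    and deg: "\<And>k. k \<le> s \<Longrightarrow> degree (c k) \<le> G" and "G \<le> n"
  shows "(\<Sum>k\<le>s. \<Sum>j\<le>G. coeff (c k) j * pochhammer (of_nat (n - j) + 1) k * f $ (n - j + k)) = 0"
proof -
  have "0 = (\<Sum>k\<le>s. (fps_of_poly (c k) * (fps_deriv ^^ k) f) $ n)"
    using arg_cong[OF ode, of "\<lambda>g. g $ n"] by (simp add: fps_sum_nth)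
  also have "\<dots> = (\<Sum>k\<le>s. \<Sum>j\<le>G. coeff (c k) j * (fps_deriv ^^ k) f $ (n - j))"
    using deg \<open>G \<le> n\<close> by (intro sum.cong refl fps_mult_nth_degree_le) auto
  finally show ?thesis
    by (simp add: fps_deriv_iterate_nth mult.assoc)
qed

lemma of_rat_pochhammer: "of_rat (pochhammer x k) = pochhammer (of_rat x) k"
  by (simp add: pochhammer_prod of_rat_prod of_rat_add)

lemma tendsto_pochhammer_over_own_power:
  "(\<lambda>n. pochhammer (real (n - j) + 1) k / real n ^ k) \<longlonglongrightarrow> 1"
proof -
  have "eventually (\<lambda>n. (\<Prod>i<k. 1 + (1 + real i - real j) / real n)
          = pochhammer (real (n - j) + 1) k / real n ^ k) sequentially"
    using eventually_ge_at_top[of "Suc j"]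
  proof eventually_elim
    case (elim n)
    have "pochhammer (real (n - j) + 1) k / real n ^ k = (\<Prod>i<k. (real (n - j) + 1 + real i) / real n)"
      by (simp add: pochhammer_prod prod_dividef atLeast0LessThan)
    also have "\<dots> = (\<Prod>i<k. 1 + (1 + real i - real j) / real n)"
      using elim by (intro prod.cong refl) (simp add: of_nat_diff divide_simps)
    finally show ?case ..
  qed
  moreover have "(\<lambda>n. \<Prod>i<k. 1 + (1 + real i - real j) / real n) \<longlonglongrightarrow> (\<Prod>i<k. 1 + 0)"
    by (intro tendsto_prod tendsto_add tendsto_const lim_const_over_n)
  ultimately show ?thesis
    using tendsto_cong by force
qed

lemma tendsto_pochhammer_over_power:
  assumes "k \<le> D"
  shows "(\<lambda>n. pochhammer (real (n - j) + 1) k / real n ^ D) \<longlonglongrightarrow> (if k = D then 1 else 0)"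
proof -
  have "(\<lambda>n. pochhammer (real (n - j) + 1) k / real n ^ k * inverse (real n) ^ (D - k))
          \<longlonglongrightarrow> 1 * 0 ^ (D - k)"
    by (intro tendsto_mult tendsto_pochhammer_over_own_power tendsto_power lim_inverse_n)
  moreover have "pochhammer (real (n - j) + 1) k / real n ^ k * inverse (real n) ^ (D - k)
      = pochhammer (real (n - j) + 1) k / real n ^ D" for n
  proof -
    have "real n ^ D = real n ^ k * real n ^ (D - k)"
      using assms by (simp flip: power_add)
    then show ?thesis
      by (simp add: divide_inverse power_inverse)
  qed
  ultimately show ?thesis
    using assms by (cases "k = D") (simp_all add: power_0_left)
qed

lemma eventually_eq_if_tendsto_finite_values:
  fixes X :: "'b \<Rightarrow> 'a::t1_space"
  assumes "(X \<longlongrightarrow> L) F" "finite V" "eventually (\<lambda>n. X n \<in> V) F"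
  shows "eventually (\<lambda>n. X n = L) F"
proof -
  have "open (- (V - {L}))"
    using assms(2) by (intro open_Compl finite_imp_closed) auto
  then have "eventually (\<lambda>n. X n \<in> - (V - {L})) F"
    by (rule topological_tendstoD[OF assms(1)]) simp
  with assms(3) show ?thesis
    by eventually_elim auto
qed

lemma linear_ode_leading_sum_tendsto_zero:
  fixes f :: "rat fps"
  assumes ode: "(\<Sum>k\<le>s. fps_of_poly (c k) * (fps_deriv ^^ k) f) = 0"
    and deg: "\<And>k. k \<le> s \<Longrightarrow> degree (c k) \<le> G"
    and order: "D \<le> s" "\<And>k. k \<le> s \<Longrightarrow> c k \<noteq> 0 \<Longrightarrow> k \<le> D"
    and bounded: "\<And>i. \<bar>of_rat (f $ i) :: real\<bar> \<le> B"
  shows "(\<lambda>n. \<Sum>j\<le>G. of_rat (coeff (c D) j * f $ (n - j + D)) :: real) \<longlonglongrightarrow> 0"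
proof -
  define r :: "rat \<Rightarrow> real" where "r = of_rat"
  define A where "A n = (\<Sum>j\<le>G. r (coeff (c D) j * f $ (n - j + D)))" for n
  \<comment> \<open>The ODE divided by n^D: only the terms of order D survive in the limit.\<close>
  define t where "t k j n = r (coeff (c k) j) * (pochhammer (real (n - j) + 1) k / real n ^ D
      - (if k = D then 1 else 0)) * r (f $ (n - j + k))" for k j n
  have A_eq: "A n = - (\<Sum>k\<le>s. \<Sum>j\<le>G. t k j n)" if n: "G \<le> n" for n
  proof -
    have "(\<Sum>k\<le>s. \<Sum>j\<le>G. r (coeff (c k) j) * (pochhammer (real (n - j) + 1) k / real n ^ D)
              * r (f $ (n - j + k)))
        = r (\<Sum>k\<le>s. \<Sum>j\<le>G. coeff (c k) j * pochhammer (of_nat (n - j) + 1) k * f $ (n - j + k))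
            / real n ^ D"
      by (simp add: r_def of_rat_sum of_rat_mult sum_divide_distrib of_rat_pochhammer of_rat_add add.commute)
    also have "\<dots> = 0"
      using linear_ode_nth[OF ode deg n] by (simp add: r_def)
    finally have main: "(\<Sum>k\<le>s. \<Sum>j\<le>G. r (coeff (c k) j)
        * (pochhammer (real (n - j) + 1) k / real n ^ D) * r (f $ (n - j + k))) = 0" .
    have lead: "(\<Sum>k\<le>s. \<Sum>j\<le>G. r (coeff (c k) j) * (if k = D then 1 else 0) * r (f $ (n - j + k)))
        = A n"
      using order(1) by (simp add: A_def r_def of_rat_mult if_distrib if_distribR sum.If_cases)
    show ?thesis
      using main lead unfolding t_def by (simp add: sum_subtractf algebra_simps)
  qed
  have t_lim: "t k j \<longlonglongrightarrow> 0" if "k \<le> s" for k j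
  proof (cases "c k = 0")
    case False
    then have "k \<le> D" using order(2) that by blast
    then have lim: "(\<lambda>n. r (coeff (c k) j) * (pochhammer (real (n - j) + 1) k / real n ^ D
                 - (if k = D then 1 else 0))) \<longlonglongrightarrow> 0"
      using tendsto_mult_right_zero[OF LIM_zero[OF tendsto_pochhammer_over_power]] by blast
    have bound: "norm (t k j n) \<le> norm (r (coeff (c k) j) * (pochhammer (real (n - j) + 1) k
                 / real n ^ D - (if k = D then 1 else 0))) * B" for n
      unfolding t_def norm_mult using bounded[of "n - j + k"] by (intro mult_left_mono) (auto simp: r_def)
    show ?thesis
      by (rule tendsto_0_le[OF lim always_eventually]) (use bound in blast)
  next
    case True
    then have "t k j = (\<lambda>n. 0)"
      by (simp add: t_def r_def fun_eq_iff)
    then show ?thesis by simp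
  qed
  have "(\<lambda>n. - (\<Sum>k\<le>s. \<Sum>j\<le>G. t k j n)) \<longlonglongrightarrow> - 0"
    by (intro tendsto_minus tendsto_null_sum) (use t_lim in auto)
  moreover have "eventually (\<lambda>n. - (\<Sum>k\<le>s. \<Sum>j\<le>G. t k j n) = A n) sequentially"
    using eventually_ge_at_top[of G] by eventually_elim (simp add: A_eq)
  ultimately have "A \<longlonglongrightarrow> 0"
    by (simp add: Lim_transform_eventually)
  then show ?thesis by (simp add: A_def[abs_def] r_def)
qed

lemma linear_ode_finite_values_poly_mult_vanishes:
  fixes f :: "rat fps"
  assumes fin: "finite {f $ n | n. n \<ge> 1}"
    and nontrivial: "\<exists>k\<le>s. c k \<noteq> 0"
    and ode: "(\<Sum>k\<le>s. fps_of_poly (c k) * (fps_deriv ^^ k) f) = 0"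
  obtains e N where "e \<noteq> 0" "\<forall>n\<ge>N. (fps_of_poly e * f) $ n = 0"
proof -
  define S where "S = {f $ n | n. n \<ge> 1}"
  define D where "D = Max {k. k \<le> s \<and> c k \<noteq> 0}"
  have D: "D \<le> s" "c D \<noteq> 0"
    using Max_in[of "{k. k \<le> s \<and> c k \<noteq> 0}"] nontrivial by (auto simp: D_def)
  have below_D: "k \<le> D" if "k \<le> s" "c k \<noteq> 0" for k
    using that by (auto simp: D_def intro: Max_ge)
  define G where "G = Max ((\<lambda>k. degree (c k)) ` {..s})"
  have deg: "degree (c k) \<le> G" if "k \<le> s" for k
    using that unfolding G_def by (intro Max_ge) auto
  have coeff_in: "f $ i \<in> insert (f $ 0) S" for i
    by (cases i) (auto simp: S_def)
  have "finite ((\<lambda>x. \<bar>of_rat x :: real\<bar>) ` insert (f $ 0) S)"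
    using fin by (simp add: S_def)
  then have bounded:
    "\<bar>of_rat (f $ i) :: real\<bar> \<le> Max ((\<lambda>x. \<bar>of_rat x :: real\<bar>) ` insert (f $ 0) S)" for i
    by (rule Max_ge) (rule imageI[OF coeff_in])
  define A where "A = (\<lambda>n. \<Sum>j\<le>G. of_rat (coeff (c D) j * f $ (n - j + D)) :: real)"
  define V where "V = (\<lambda>w. \<Sum>j\<le>G. of_rat (coeff (c D) j * w j) :: real) ` PiE {..G} (\<lambda>_. S)"
  have "A \<longlonglongrightarrow> 0"
    unfolding A_def by (rule linear_ode_leading_sum_tendsto_zero[OF ode deg D(1) below_D bounded])
  moreover have "finite V"
    using fin unfolding V_def S_def by (intro finite_imageI finite_PiE) auto
  moreover have "eventually (\<lambda>n. A n \<in> V) sequentially"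
    using eventually_ge_at_top[of "Suc G"]
  proof eventually_elim
    case (elim n)
    then have "restrict (\<lambda>j. f $ (n - j + D)) {..G} \<in> PiE {..G} (\<lambda>_. S)"
      by (auto simp: S_def)
    moreover have "A n = (\<Sum>j\<le>G. of_rat (coeff (c D) j * restrict (\<lambda>j. f $ (n - j + D)) {..G} j))"
      unfolding A_def by (intro sum.cong) auto
    ultimately show ?case
      unfolding V_def by blast
  qed
  ultimately have "eventually (\<lambda>n. A n = 0) sequentially"
    by (rule eventually_eq_if_tendsto_finite_values)
  then obtain N where N: "\<And>n. n \<ge> N \<Longrightarrow> A n = 0"
    by (auto simp: eventually_sequentially)
  have "(fps_of_poly (c D) * f) $ m = 0" if "m \<ge> N + G + D" for m
  proof -
    have "(fps_of_poly (c D) * f) $ m = (\<Sum>j\<le>G. coeff (c D) j * f $ (m - j))"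
      using deg[OF D(1)] that by (intro fps_mult_nth_degree_le) auto
    also have "\<dots> = (\<Sum>j\<le>G. coeff (c D) j * f $ (m - D - j + D))"
      using that by (intro sum.cong) auto
    finally have "of_rat ((fps_of_poly (c D) * f) $ m) = A (m - D)"
      by (simp add: A_def of_rat_sum)
    then show ?thesis
      using N[of "m - D"] that by simp
  qed
  then show thesis
    using D(2) by (intro that[of "c D" "N + G + D"]) auto
qed

section \<open>Eventually periodic coefficients\<close>

lemma eventually_periodic_shift_iff:
  "eventually_periodic (\<lambda>n. s (n + r)) \<longleftrightarrow> eventually_periodic s"
proof
  assume "eventually_periodic (\<lambda>n. s (n + r))"
  then obtain N d where d: "d \<ge> 1" "\<And>n. n \<ge> N \<Longrightarrow> s (n + d + r) = s (n + r)"
    by (auto simp: eventually_periodic_def)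
  have "s (n + d) = s n" if "n \<ge> N + r" for n
    using d(2)[of "n - r"] that by simp
  then show "eventually_periodic s"
    unfolding eventually_periodic_def using d(1) by blast
next
  assume "eventually_periodic s"
  then obtain N d where d: "d \<ge> 1" "\<And>n. n \<ge> N \<Longrightarrow> s (n + d) = s n"
    by (auto simp: eventually_periodic_def)
  have "s (n + d + r) = s (n + r)" if "n \<ge> N" for n
    using d(2)[of "n + r"] that by (simp add: ac_simps)
  then show "eventually_periodic (\<lambda>n. s (n + r))"
    unfolding eventually_periodic_def using d(1) by blast
qed

lemma eventually_periodic_comp:
  "eventually_periodic s \<Longrightarrow> eventually_periodic (\<lambda>n. g (s n))"
  unfolding eventually_periodic_def by metis

lemma eventually_periodic_orbit:
  assumes step: "\<And>m. m \<ge> M \<Longrightarrow> W (Suc m) = \<Psi> (W m)"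
    and fin: "finite V" and vals: "\<And>m. m \<ge> M \<Longrightarrow> W m \<in> V"
  shows "eventually_periodic W"
proof -
  have "\<not> inj_on W {M..}"
  proof
    assume "inj_on W {M..}"
    moreover have "W ` {M..} \<subseteq> V"
      using vals by auto
    ultimately have "finite {M..}"
      using fin inj_on_finite by blast
    then show False
      using infinite_Ici[of M] by simp
  qed
  then obtain p q where pq: "M \<le> p" "p < q" "W p = W q"
    unfolding inj_on_def by (metis atLeast_iff linorder_neqE_nat)
  have orbit: "W (p + t) = W (q + t)" for t
  proof (induction t)
    case (Suc t)
    then show ?case using pq step[of "p + t"] step[of "q + t"] by simp
  qed (use pq in simp)
  have "W (n + (q - p)) = W n" if "n \<ge> p" for n
  proof -
    have "n + (q - p) = q + (n - p)" "n = p + (n - p)"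
      using that pq(2) by simp_all
    then show ?thesis
      using orbit[of "n - p"] by metis
  qed
  then show ?thesis
    unfolding eventually_periodic_def using pq(2) by (intro exI[of _ p] exI[of _ "q - p"]) auto
qed

lemma eventually_periodic_if_poly_mult_vanishes:
  fixes f :: "'a::field fps"
  assumes fin: "finite {f $ n | n. n \<ge> 1}" and "e \<noteq> 0"
    and annihilates: "\<forall>n\<ge>N. (fps_of_poly e * f) $ n = 0"
  shows "eventually_periodic (fps_nth f)"
proof -
  define j0 where "j0 = (LEAST j. coeff e j \<noteq> 0)"
  have "\<exists>j. coeff e j \<noteq> 0"
    using \<open>e \<noteq> 0\<close> by (auto simp: poly_eq_iff)
  then have j0: "coeff e j0 \<noteq> 0"
    unfolding j0_def by (rule LeastI_ex)
  have below_j0: "coeff e j = 0" if "j < j0" for j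
    using not_less_Least[of j "\<lambda>j. coeff e j \<noteq> 0"] that by (auto simp: j0_def)
  have "j0 \<le> degree e"
    using j0 by (rule le_degree)
  define r where "r = degree e - j0"
  define window where "window m = map (\<lambda>l. f $ (m + l)) [0..<r]" for m
  define \<Phi> where "\<Phi> w = - (\<Sum>i=Suc j0..degree e. coeff e i * w ! (degree e - i)) / coeff e j0"
    for w :: "'a list"
  \<comment> \<open>Coefficient m + deg e of e f = 0 determines f_(m+r) from the r preceding coefficients.\<close>
  have recurrence: "f $ (m + r) = \<Phi> (window m)" if "m \<ge> N" for m
  proof -
    have "0 = (\<Sum>i=0..m + degree e. coeff e i * f $ (m + degree e - i))"
      using annihilates that by (simp add: fps_mult_nth)
    also have "\<dots> = (\<Sum>i=j0..degree e. coeff e i * f $ (m + degree e - i))"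
      by (rule sum.mono_neutral_right) (auto simp: below_j0 coeff_eq_0 not_le)
    also have "\<dots> = coeff e j0 * f $ (m + r)
                    + (\<Sum>i=Suc j0..degree e. coeff e i * window m ! (degree e - i))"
      using \<open>j0 \<le> degree e\<close>
      by (simp add: sum.atLeast_Suc_atMost r_def window_def) (rule sum.cong; auto)
    finally show ?thesis
      using j0 by (simp add: \<Phi>_def field_simps eq_neg_iff_add_eq_0)
  qed
  define W where "W m = map (\<lambda>l. f $ (m + l)) [0..<Suc r]" for m
  have "W (Suc m) = tl (W m) @ [\<Phi> (tl (W m))]" if "m \<ge> N" for m
  proof -
    have "tl (W m) = window (Suc m)"
      by (simp add: W_def window_def map_upt_Suc del: upt_Suc)
    then show ?thesis
      using recurrence[of "Suc m"] that by (simp add: W_def window_def)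
  qed
  moreover have "W m \<in> {w. set w \<subseteq> {f $ n | n. n \<ge> 1} \<and> length w = Suc r}" if "m \<ge> Suc N" for m
    using that by (auto simp: W_def)
  moreover have "finite {w. set w \<subseteq> {f $ n | n. n \<ge> 1} \<and> length w = Suc r}"
    using finite_lists_length_eq[OF fin] .
  ultimately have "eventually_periodic W"
    by (intro eventually_periodic_orbit[of "Suc N"]) auto
  then have "eventually_periodic (\<lambda>m. hd (W m))"
    by (rule eventually_periodic_comp)
  then show ?thesis
    by (simp add: W_def upt_conv_Cons del: upt_Suc)
qed

lemma rational_fps_if_eventually_periodic:
  assumes "eventually_periodic (fps_nth f)"
  shows "rational_fps f"
proof -
  obtain N d where d: "d \<ge> 1" "\<And>n. n \<ge> N \<Longrightarrow> f $ (n + d) = f $ n"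
    using assms by (auto simp: eventually_periodic_def)
  define q :: "rat poly" where "q = 1 - monom 1 d"
  define H where "H = fps_of_poly q * f"
  have "H $ n = 0" if "n \<ge> N + d" for n
  proof -
    have "H $ n = f $ n - f $ (n - d)"
      using that by (simp add: H_def q_def fps_of_poly_diff fps_of_poly_monom' algebra_simps
          fps_X_power_mult_right_nth)
    then show ?thesis
      using d(2)[of "n - d"] that by simp
  qed
  then have "fps_of_poly (Poly (map (fps_nth H) [0..<N + d])) = H"
    by (intro fps_ext) (auto simp: nth_default_def)
  moreover have "q \<noteq> 0"
    using d(1) by (auto simp: q_def poly_eq_iff dest: spec[of _ 0])
  ultimately show ?thesis
    unfolding rational_fps_def H_def by metis
qed

lemma rational_fps_if_rational_poly_mult:
  assumes "u \<noteq> 0" "rational_fps (fps_of_poly u * f)"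
  shows "rational_fps f"
proof -
  obtain p q where "q \<noteq> 0" "fps_of_poly q * (fps_of_poly u * f) = fps_of_poly p"
    using assms(2) by (auto simp: rational_fps_def)
  then have "q * u \<noteq> 0" "fps_of_poly (q * u) * f = fps_of_poly p"
    using assms(1) by (simp_all add: fps_of_poly_mult mult.assoc)
  then show ?thesis
    unfolding rational_fps_def by blast
qed

lemma eventually_periodic_if_algebraic:
  fixes f :: "rat fps"
  assumes fin: "finite {f $ n | n. n \<ge> 1}" and "algebraic_fps f"
  shows "eventually_periodic (fps_nth f)"
proof -
  obtain s c where "\<exists>k\<le>s. c k \<noteq> 0" "(\<Sum>k\<le>s. fps_of_poly (c k) * (fps_deriv ^^ k) f) = 0"
    using assms(2) by (rule algebraic_fps_linear_ode)
  then obtain e N where "e \<noteq> 0" "\<forall>n\<ge>N. (fps_of_poly e * f) $ n = 0"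
    by (rule linear_ode_finite_values_poly_mult_vanishes[OF fin])
  then show ?thesis
    by (rule eventually_periodic_if_poly_mult_vanishes[OF fin])
qed

theorem mainTheorem8:
  fixes w :: "nat \<Rightarrow> 'a::finite" and a :: 'a and m :: nat
  assumes inf: "infinite {i. w i = a}"
    and fin: "finite {fps_nth ((1 - fps_X) ^ m * occ_series w a) n | n. n \<ge> 1}"
  shows "(eventually_periodic (\<lambda>n. fps_nth ((1 - fps_X) ^ m * occ_series w a) (n + 1))
            \<longrightarrow> rational_fps (occ_series w a))
       \<and> (\<not> eventually_periodic (\<lambda>n. fps_nth ((1 - fps_X) ^ m * occ_series w a) (n + 1))
            \<longrightarrow> transcendental_fps (occ_series w a))"
proof -
  \<comment> \<open>The argument only uses that the coefficients of (1 - X)^m P take finitely many values;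
     the hypothesis inf merely ensures that occ_pos is not a junk value of THE.\<close>
  define u :: "rat poly" where "u = [:1, -1:] ^ m"
  have one_minus_X_power: "(1 - fps_X) ^ m = fps_of_poly u"
    by (simp add: u_def fps_of_poly_power fps_of_poly_pCons fps_of_poly_const fps_const_neg)
  have "u \<noteq> 0"
    by (simp add: u_def)
  have periodic_iff: "eventually_periodic (\<lambda>n. fps_nth ((1 - fps_X) ^ m * occ_series w a) (n + 1))
      \<longleftrightarrow> eventually_periodic (fps_nth (fps_of_poly u * occ_series w a))"
    using eventually_periodic_shift_iff[of "fps_nth (fps_of_poly u * occ_series w a)" 1] by (simp add: one_minus_X_power)
  have "rational_fps (occ_series w a)"
    if "eventually_periodic (fps_nth (fps_of_poly u * occ_series w a))"
    using rational_fps_if_rational_poly_mult[OF \<open>u \<noteq> 0\<close> rational_fps_if_eventually_periodic[OF that]] .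
  moreover have "transcendental_fps (occ_series w a)"
    if "\<not> eventually_periodic (fps_nth (fps_of_poly u * occ_series w a))"
  proof -
    have "\<not> algebraic_fps (fps_of_poly u * occ_series w a)"
      using that eventually_periodic_if_algebraic[OF fin[unfolded one_minus_X_power]] by blast
    then show ?thesis
      unfolding transcendental_fps_iff_not_algebraic using algebraic_fps_mult_poly by blast
  qed
  ultimately show ?thesis
    unfolding periodic_iff by blast
qed

end
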